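(* A linear code $\mathcal{C}$ of length $n$ over $R$ is Hermitian self-dual (i.e. $\mathcal{C}=\mathcal{C}^H$) if and only if the lattice $\frac12\Lambda(\mathcal{C})$ is unimodular, i.e. $\frac12\Lambda(\mathcal{C})=\big(\frac12\Lambda(\mathcal{C})\big)^*$.
   Context: $R=\mathbb{Z}_4[v]/(v^2-v)$, elements $a+bv$ with $a,b\in\mathbb{Z}_4$; conjugation on $R$ is $\overline{a+bv}=a+b(1-v)$. The Hermitian inner product on $R^n$ is $\langle\mathbf{w},\mathbf{u}\rangle=\sum_iw_i\overline{u_i}$ and $\mathcal{C}^H=\{\mathbf{w}\in R^n:\langle\mathbf{w},\mathbf{u}\rangle=0\ \forall\mathbf{u}\in\mathcal{C}\}$. Let $\ell$ be an integer with $\ell\equiv7\pmod 8$ and $2\ell+1$ square-free; $K=\mathbb{Q}(\sqrt{-(2\ell+1)})$, $\omega=\frac{1+\sqrt{-(2\ell+1)}}{2}$, $\mathcal{O}_K=\mathbb{Z}[\omega]$. Let $\rho:\mathcal{O}_K\to\mathcal{O}_K/4\mathcal{O}_K\cong R$ be reduction composed with the isomorphism $a+b\omega\mapsto a+bv$, applied coordinatewise. $\Lambda(\mathcal{C})=\{\mathbf{x}\in\mathcal{O}_K^n:\rho(\mathbf{x})\in\mathcal{C}\}$. For $\mathbf{x},\mathbf{y}\in K^n$, $\langle\mathbf{x},\mathbf{y}\rangle=\sum_ix_i\overline{y_i}$ (complex conjugation); for an $\mathcal{O}_K$-lattice $\Lambda\subseteq K^n$, $\Lambda^*=\{\mathbf{x}\in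 K^n:\langle\mathbf{x},\mathbf{y}\rangle\in\mathcal{O}_K\ \forall\mathbf{y}\in\Lambda\}$. *)

theory Defs
  imports Complex_Main "HOL-Library.Numeral_Type" "HOL-Computational_Algebra.Squarefree"
begin

text \<open>The ring R = Z4[v]/(v^2 - v): the element a + b v is the pair (a, b) with a, b in Z4.\<close>
type_synonym Rv = "4 \<times> 4"

definition R_add :: "Rv \<Rightarrow> Rv \<Rightarrow> Rv" where
  "R_add x y = (fst x + fst y, snd x + snd y)"

text \<open>(a + b v)(c + d v) = ac + (ad + bc + bd) v, using v^2 = v.\<close>
definition R_mult :: "Rv \<Rightarrow> Rv \<Rightarrow> Rv" where
  "R_mult x y = (fst x * fst y, fst x * snd y + snd x * fst y + snd x * snd y)"

definition R_zero :: Rv where "R_zero = (0, 0)"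

text \<open>conj(a + b v) = a + b (1 - v) = (a + b) - b v.\<close>
definition R_conj :: "Rv \<Rightarrow> Rv" where
  "R_conj x = (fst x + snd x, - snd x)"

text \<open>Words of length n: functions nat => R vanishing from index n on.\<close>
definition Rn :: "nat \<Rightarrow> (nat \<Rightarrow> Rv) set" where
  "Rn n = {w. \<forall>i\<ge>n. w i = R_zero}"

definition herm_ip_R :: "nat \<Rightarrow> (nat \<Rightarrow> Rv) \<Rightarrow> (nat \<Rightarrow> Rv) \<Rightarrow> Rv" where
  "herm_ip_R n w u = foldr R_add (map (\<lambda>i. R_mult (w i) (R_conj (u i))) [0..<n]) R_zero"

definition linear_code :: "nat \<Rightarrow> (nat \<Rightarrow> Rv) set \<Rightarrow> bool" where
  "linear_code n C \<longleftrightarrow> C \<subseteq> Rn n \<and> (\<lambda>_. R_zero) \<in> C \<and>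
     (\<forall>w\<in>C. \<forall>u\<in>C. (\<lambda>i. R_add (w i) (u i)) \<in> C) \<and>
     (\<forall>r. \<forall>w\<in>C. (\<lambda>i. R_mult r (w i)) \<in> C)"

definition herm_dual :: "nat \<Rightarrow> (nat \<Rightarrow> Rv) set \<Rightarrow> (nat \<Rightarrow> Rv) set" where
  "herm_dual n C = {w \<in> Rn n. \<forall>u\<in>C. herm_ip_R n w u = R_zero}"

text \<open>The number field K = Q(sqrt(-(2l+1))) inside the complex numbers, l > 0.\<close>
definition omega :: "nat \<Rightarrow> complex" where
  "omega l = (1 + \<i> * complex_of_real (sqrt (real (2 * l + 1)))) / 2"

definition OK :: "nat \<Rightarrow> complex set" where
  "OK l = {of_int a + of_int b * omega l | a b. True}"

definition Kfield :: "nat \<Rightarrow> complex set" where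
  "Kfield l = {of_rat p + of_rat q * omega l | p q. True}"

text \<open>rho: O_K -> O_K / 4 O_K = R, a + b omega |-> a + b v (reduction mod 4).\<close>
definition rho :: "nat \<Rightarrow> complex \<Rightarrow> Rv" where
  "rho l z = (let (a, b) = (THE (a, b). z = of_int a + of_int b * omega l)
              in (of_int a, of_int b))"

definition Lambda :: "nat \<Rightarrow> nat \<Rightarrow> (nat \<Rightarrow> Rv) set \<Rightarrow> (nat \<Rightarrow> complex) set" where
  "Lambda l n C = {x. (\<forall>i<n. x i \<in> OK l) \<and> (\<forall>i\<ge>n. x i = 0) \<and> (\<lambda>i. rho l (x i)) \<in> C}"

definition half_lattice :: "(nat \<Rightarrow> complex) set \<Rightarrow> (nat \<Rightarrow> complex) set" where
  "half_lattice L = (\<lambda>x i. x i / 2) ` L"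

definition lattice_dual :: "nat \<Rightarrow> nat \<Rightarrow> (nat \<Rightarrow> complex) set \<Rightarrow> (nat \<Rightarrow> complex) set" where
  "lattice_dual l n L = {x. (\<forall>i<n. x i \<in> Kfield l) \<and> (\<forall>i\<ge>n. x i = 0) \<and>
      (\<forall>y\<in>L. (\<Sum>i<n. x i * cnj (y i)) \<in> OK l)}"

end

theory Submission
  imports Defs
begin

text \<open>
  Since \<open>\<omega>\<^sup>2 = \<omega> - (l+1)/2\<close> and \<open>8\<close> divides \<open>l + 1\<close>,
  the coordinates of \<open>x \<cdot> conj y\<close> reduce mod 4 to those of \<open>\<rho>(x) \<cdot> conj \<rho>(y)\<close> in \<open>R\<close>. Hence for
  integral vectors \<open>\<langle>x/2, y/2\<rangle> \<in> \<O>\<^sub>K\<close> iff \<open>\<langle>\<rho> x, \<rho> y\<rangle> = 0\<close>. Together with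
  \<open>4e\<^sub>i \<in> \<Lambda>(C)\<close>, which forces the dual of \<open>\<Lambda>(C)/2\<close> to lie in \<open>\<O>\<^sub>K\<^sup>n/2\<close>, this gives
  \<open>(\<Lambda>(C)/2)\<^sup>* = \<Lambda>(C\<^sup>H)/2\<close>, and \<open>C \<mapsto> \<Lambda>(C)/2\<close> is injective because \<open>\<rho>\<close> is onto.
  Square-freeness of \<open>2l + 1\<close> only serves to make \<open>\<O>\<^sub>K = \<int>[\<omega>]\<close>, which the definition of
  \<open>OK\<close> already builds in.
\<close>

lemma of_int_eq_0_iff_4_dvd: "(of_int a :: 4) = 0 \<longleftrightarrow> 4 dvd a"
proof -
  have "(of_int a :: 4) = 0 \<longleftrightarrow> Rep_bit0 (of_int a :: 4) = Rep_bit0 (0::4)"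
    using bit0.Rep_inject_sym by blast
  also have "\<dots> \<longleftrightarrow> a mod 4 = 0"
    by (simp add: bit0.of_int_eq bit0.Rep_0 bit0.Abs_inverse)
  finally show ?thesis by auto
qed

lemma ex_of_int_4: "\<exists>a. (r::4) = of_int a"
  by (cases r) auto

definition OK_elem :: "nat \<Rightarrow> int \<Rightarrow> int \<Rightarrow> complex" where
  "OK_elem l a b = of_int a + of_int b * omega l"

lemma OK_iff_OK_elem: "z \<in> OK l \<longleftrightarrow> (\<exists>a b. z = OK_elem l a b)"
  by (auto simp: OK_def OK_elem_def)

lemma OK_elem_in_OK [simp]: "OK_elem l a b \<in> OK l"
  by (auto simp: OK_iff_OK_elem)

lemma Re_omega: "Re (omega l) = 1 / 2"
  by (simp add: omega_def)

lemma Im_omega: "Im (omega l) = sqrt (real (2 * l + 1)) / 2"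
  by (simp add: omega_def)

lemma cnj_omega: "cnj (omega l) = 1 - omega l"
  by (simp add: omega_def complex_eq_iff)

lemma OK_elem_eq_iff [simp]: "OK_elem l a b = OK_elem l c d \<longleftrightarrow> a = c \<and> b = d"
proof
  assume eq: "OK_elem l a b = OK_elem l c d"
  have "of_int b * sqrt (real (2 * l + 1)) = of_int d * sqrt (real (2 * l + 1))"
    using arg_cong[OF eq, of Im] by (simp add: OK_elem_def Im_omega)
  then have "b = d" by simp
  with eq show "a = c \<and> b = d" by (simp add: OK_elem_def)
qed simp

lemma rho_OK_elem [simp]: "rho l (OK_elem l a b) = (of_int a, of_int b)"
proof -
  have "(THE (a', b'). OK_elem l a b = of_int a' + of_int b' * omega l) = (a, b)"
    by (rule the_equality) (auto simp flip: OK_elem_def)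
  then show ?thesis by (simp add: rho_def)
qed

lemma rho_0 [simp]: "rho l 0 = R_zero"
  using rho_OK_elem[of l 0 0] by (simp add: OK_elem_def R_zero_def)

lemma rho_4 [simp]: "rho l 4 = R_zero"
  using rho_OK_elem[of l 4 0] by (simp add: OK_elem_def R_zero_def)

lemma zero_in_OK [simp]: "0 \<in> OK l"
  using OK_elem_in_OK[of l 0 0] by (simp add: OK_elem_def)

lemma four_in_OK [simp]: "4 \<in> OK l"
  using OK_elem_in_OK[of l 4 0] by (simp add: OK_elem_def)

lemma rho_surj: "\<exists>z\<in>OK l. rho l z = r"
proof -
  obtain a b where "fst r = of_int a" "snd r = of_int b"
    using ex_of_int_4 by metis
  then have "rho l (OK_elem l a b) = r" by (simp add: prod_eq_iff)
  then show ?thesis by (metis OK_elem_in_OK)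
qed

lemma half_OK_in_Kfield:
  assumes "z \<in> OK l"
  shows "z / 2 \<in> Kfield l"
proof -
  obtain a b where "z = OK_elem l a b"
    using assms by (auto simp: OK_iff_OK_elem)
  then have "z / 2 = of_rat (of_int a / 2) + of_rat (of_int b / 2) * omega l"
    by (simp add: OK_elem_def of_rat_divide field_simps)
  then show ?thesis
    unfolding Kfield_def by blast
qed

lemma OK_elem_div_4_in_OK_iff: "OK_elem l a b / 4 \<in> OK l \<longleftrightarrow> 4 dvd a \<and> 4 dvd b"
proof
  assume "OK_elem l a b / 4 \<in> OK l"
  then obtain c d where "OK_elem l a b / 4 = OK_elem l c d"
    by (auto simp: OK_iff_OK_elem)
  then have "OK_elem l a b = OK_elem l (4 * c) (4 * d)"
    by (simp add: OK_elem_def field_simps)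
  then show "4 dvd a \<and> 4 dvd b" by simp
next
  assume "4 dvd a \<and> 4 dvd b"
  then obtain c d where "a = 4 * c" "b = 4 * d" by (auto elim!: dvdE)
  then have "OK_elem l a b / 4 = OK_elem l c d"
    by (simp add: OK_elem_def field_simps)
  then show "OK_elem l a b / 4 \<in> OK l" by simp
qed

lemma omega_square:
  assumes "odd l"
  shows "omega l * omega l = omega l - of_int ((int l + 1) div 2)"
proof -
  obtain k where k: "l = 2 * k + 1" using assms oddE by blast
  have M: "real_of_int ((int l + 1) div 2) = (real l + 1) / 2"
    unfolding k by simp
  have "sqrt (real (2 * l + 1)) * sqrt (real (2 * l + 1)) = 2 * real l + 1"
    by simp
  with M show ?thesis
    by (simp add: complex_eq_iff Re_omega Im_omega field_simps)
qed

lemma mult_conj_quadratic: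
  fixes a b c d m w :: "'a::comm_ring_1"
  assumes "w * w = w - m"
  shows "(a + b * w) * ((c + d) - d * w) = (a * (c + d) + b * d * m) + (b * c - a * d) * w"
proof -
  have "(a + b * w) * ((c + d) - d * w) = a * (c + d) + (b * (c + d) - a * d) * w - b * d * (w * w)"
    by (simp add: algebra_simps)
  then show ?thesis
    unfolding assms by (simp add: algebra_simps)
qed

lemma OK_elem_mult_cnj:
  assumes "odd l"
  shows "OK_elem l a b * cnj (OK_elem l c d) =
    OK_elem l (a * (c + d) + b * d * ((int l + 1) div 2)) (b * c - a * d)"
proof -
  have "cnj (OK_elem l c d) = (of_int c + of_int d) - of_int d * omega l"
    by (simp add: OK_elem_def cnj_omega algebra_simps)
  then show ?thesis
    using mult_conj_quadratic[OF omega_square[OF assms], of "of_int a" "of_int b" "of_int c" "of_int d"]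
    by (simp add: OK_elem_def add_diff_eq)
qed

lemma sum_OK_elem: "(\<Sum>i\<in>A. OK_elem l (f i) (g i)) = OK_elem l (\<Sum>i\<in>A. f i) (\<Sum>i\<in>A. g i)"
  by (simp add: OK_elem_def sum.distrib sum_distrib_right)

lemma herm_ip_R_eq_sum:
  "herm_ip_R n w u =
     ((\<Sum>i<n. fst (R_mult (w i) (R_conj (u i)))), (\<Sum>i<n. snd (R_mult (w i) (R_conj (u i)))))"
proof -
  have foldr_R_add: "foldr R_add (map f xs) R_zero =
      (sum_list (map (\<lambda>i. fst (f i)) xs), sum_list (map (\<lambda>i. snd (f i)) xs))" for f xs
    by (induction xs) (auto simp: R_add_def R_zero_def)
  show ?thesis
    unfolding herm_ip_R_def foldr_R_add
    by (simp add: lessThan_atLeast0 sum_set_upt_conv_sum_list_nat[symmetric])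
qed

lemma herm_ip_rho_eq_zero_iff:
  assumes l: "l mod 8 = 7" and x: "\<forall>i<n. x i \<in> OK l" and y: "\<forall>i<n. y i \<in> OK l"
  shows "herm_ip_R n (\<lambda>i. rho l (x i)) (\<lambda>i. rho l (y i)) = R_zero \<longleftrightarrow>
         (\<Sum>i<n. x i / 2 * cnj (y i / 2)) \<in> OK l"
proof -
  have odd: "odd l" using l by presburger
  define M where "M = (int l + 1) div 2"
  have M_zero: "(of_int M :: 4) = 0"
    unfolding M_def of_int_eq_0_iff_4_dvd using l by presburger
  obtain xa xb where X: "\<forall>i<n. x i = OK_elem l (xa i) (xb i)"
    using x unfolding OK_iff_OK_elem by metis
  obtain ya yb where Y: "\<forall>i<n. y i = OK_elem l (ya i) (yb i)"
    using y unfolding OK_iff_OK_elem by metis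
  define P where "P i = xa i * (ya i + yb i) + xb i * yb i * M" for i
  define Q where "Q i = xb i * ya i - xa i * yb i" for i
  have "(\<Sum>i<n. x i / 2 * cnj (y i / 2)) = (\<Sum>i<n. OK_elem l (P i) (Q i)) / 4"
    using X Y by (simp add: sum_divide_distrib OK_elem_mult_cnj[OF odd] P_def Q_def M_def)
  also have "\<dots> = OK_elem l (\<Sum>i<n. P i) (\<Sum>i<n. Q i) / 4"
    by (simp only: sum_OK_elem)
  finally have complex_side:
    "(\<Sum>i<n. x i / 2 * cnj (y i / 2)) = OK_elem l (\<Sum>i<n. P i) (\<Sum>i<n. Q i) / 4" .
  have "herm_ip_R n (\<lambda>i. rho l (x i)) (\<lambda>i. rho l (y i)) =
        ((\<Sum>i<n. of_int (P i)), (\<Sum>i<n. of_int (Q i)))"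
    unfolding herm_ip_R_eq_sum using X Y M_zero
    by (auto intro!: sum.cong simp: R_mult_def R_conj_def P_def Q_def algebra_simps)
  then have R_side: "herm_ip_R n (\<lambda>i. rho l (x i)) (\<lambda>i. rho l (y i)) =
        (of_int (\<Sum>i<n. P i), of_int (\<Sum>i<n. Q i))"
    by simp
  show ?thesis
    unfolding complex_side R_side OK_elem_div_4_in_OK_iff R_zero_def prod.inject
      of_int_eq_0_iff_4_dvd ..
qed

definition OK_vecs :: "nat \<Rightarrow> nat \<Rightarrow> (nat \<Rightarrow> complex) set" where
  "OK_vecs l n = {x. (\<forall>i<n. x i \<in> OK l) \<and> (\<forall>i\<ge>n. x i = 0)}"

lemma Lambda_eq: "Lambda l n C = {x \<in> OK_vecs l n. (\<lambda>i. rho l (x i)) \<in> C}"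
  by (auto simp: Lambda_def OK_vecs_def)

lemma rho_vec_surj:
  assumes "u \<in> Rn n"
  shows "\<exists>x\<in>OK_vecs l n. (\<lambda>i. rho l (x i)) = u"
proof -
  obtain z where z: "\<And>r. z r \<in> OK l \<and> rho l (z r) = r"
    using rho_surj by metis
  define x where "x i = (if i < n then z (u i) else 0)" for i
  have "(\<lambda>i. rho l (x i)) = u"
    using assms z by (auto simp: x_def Rn_def fun_eq_iff)
  moreover have "x \<in> OK_vecs l n"
    using z by (simp add: x_def OK_vecs_def)
  ultimately show ?thesis by blast
qed

lemma rho_image_Lambda:
  assumes "C \<subseteq> Rn n"
  shows "(\<lambda>x i. rho l (x i)) ` Lambda l n C = C"
  using rho_vec_surj[of _ n l] assms by (fastforce simp: Lambda_eq)

lemma half_lattice_eq_iff: "half_lattice L = half_lattice L' \<longleftrightarrow> L = L'"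
proof -
  have "inj (\<lambda>(x :: nat \<Rightarrow> complex) i. x i / 2)"
    by (auto intro!: injI simp: fun_eq_iff)
  then show ?thesis
    unfolding half_lattice_def by (rule inj_image_eq_iff)
qed

lemma half_in_lattice_dual_iff:
  assumes "l mod 8 = 7" and "C \<subseteq> Rn n" and x: "x \<in> OK_vecs l n"
  shows "(\<lambda>i. x i / 2) \<in> lattice_dual l n (half_lattice (Lambda l n C)) \<longleftrightarrow>
         (\<forall>u\<in>C. herm_ip_R n (\<lambda>i. rho l (x i)) u = R_zero)"
proof -
  have x_OK: "\<forall>i<n. x i \<in> OK l"
    using x by (simp add: OK_vecs_def)
  have "(\<lambda>i. x i / 2) \<in> lattice_dual l n (half_lattice (Lambda l n C)) \<longleftrightarrow>
        (\<forall>y\<in>Lambda l n C. (\<Sum>i<n. x i / 2 * cnj (y i / 2)) \<in> OK l)"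
    using x half_OK_in_Kfield by (auto simp: lattice_dual_def half_lattice_def OK_vecs_def)
  also have "\<dots> \<longleftrightarrow> (\<forall>y\<in>Lambda l n C. herm_ip_R n (\<lambda>i. rho l (x i)) (\<lambda>i. rho l (y i)) = R_zero)"
    using herm_ip_rho_eq_zero_iff[OF assms(1) x_OK] by (auto simp: Lambda_eq OK_vecs_def)
  also have "\<dots> \<longleftrightarrow> (\<forall>u\<in>(\<lambda>y i. rho l (y i)) ` Lambda l n C. herm_ip_R n (\<lambda>i. rho l (x i)) u = R_zero)"
    by simp
  finally show ?thesis
    unfolding rho_image_Lambda[OF assms(2)] .
qed

text \<open>Pairing with \<open>2e\<^sub>i = 4e\<^sub>i/2\<close>, where \<open>4e\<^sub>i \<in> \<Lambda>(C)\<close> because \<open>\<rho>(4e\<^sub>i) = 0\<close>.\<close>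

lemma lattice_dual_half_Lambda_integral:
  assumes "(\<lambda>_. R_zero) \<in> C" and h: "h \<in> lattice_dual l n (half_lattice (Lambda l n C))"
  shows "(\<lambda>i. 2 * h i) \<in> OK_vecs l n"
proof -
  have "2 * h i \<in> OK l" if "i < n" for i
  proof -
    define e where "e j = (if j = i then 4 else 0 :: complex)" for j
    have "(\<lambda>j. rho l (e j)) = (\<lambda>_. R_zero)"
      by (auto simp: e_def)
    then have "e \<in> Lambda l n C"
      using assms(1) \<open>i < n\<close> by (simp add: Lambda_eq OK_vecs_def e_def)
    then have "(\<Sum>j<n. h j * cnj (e j / 2)) \<in> OK l"
      using h by (auto simp: lattice_dual_def half_lattice_def)
    moreover have "(\<Sum>j<n. h j * cnj (e j / 2)) = (\<Sum>j<n. if j = i then 2 * h j else 0)"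
      by (rule sum.cong) (auto simp: e_def)
    ultimately show ?thesis
      using \<open>i < n\<close> by simp
  qed
  moreover have "\<forall>i\<ge>n. h i = 0"
    using h by (simp add: lattice_dual_def)
  ultimately show ?thesis
    by (simp add: OK_vecs_def)
qed

theorem lattice_dual_half_Lambda:
  assumes l: "l mod 8 = 7" and "C \<subseteq> Rn n" and "(\<lambda>_. R_zero) \<in> C"
  shows "lattice_dual l n (half_lattice (Lambda l n C)) = half_lattice (Lambda l n (herm_dual n C))"
proof (intro equalityI subsetI)
  fix h assume h: "h \<in> lattice_dual l n (half_lattice (Lambda l n C))"
  define z where "z i = 2 * h i" for i
  have z: "z \<in> OK_vecs l n"
    unfolding z_def using lattice_dual_half_Lambda_integral[OF assms(3) h] .
  have h_eq: "h = (\<lambda>i. z i / 2)"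
    by (simp add: z_def)
  have "(\<lambda>i. rho l (z i)) \<in> Rn n"
    using z by (simp add: OK_vecs_def Rn_def)
  with h half_in_lattice_dual_iff[OF l assms(2) z] have "z \<in> Lambda l n (herm_dual n C)"
    unfolding h_eq by (simp add: Lambda_eq z herm_dual_def)
  then show "h \<in> half_lattice (Lambda l n (herm_dual n C))"
    unfolding h_eq half_lattice_def by blast
next
  fix h assume "h \<in> half_lattice (Lambda l n (herm_dual n C))"
  then obtain x where x: "x \<in> OK_vecs l n" "(\<lambda>i. rho l (x i)) \<in> herm_dual n C"
    and h_eq: "h = (\<lambda>i. x i / 2)"
    by (auto simp: half_lattice_def Lambda_eq)
  then show "h \<in> lattice_dual l n (half_lattice (Lambda l n C))"
    using half_in_lattice_dual_iff[OF l assms(2) x(1)] by (simp add: herm_dual_def)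
qed

theorem theorem9:
  fixes l n :: nat and C :: "(nat \<Rightarrow> Rv) set"
  assumes "l mod 8 = 7"
    and "squarefree (2 * l + 1)"
    and "linear_code n C"
  shows "herm_dual n C = C \<longleftrightarrow>
         half_lattice (Lambda l n C) = lattice_dual l n (half_lattice (Lambda l n C))"
proof -
  have C: "C \<subseteq> Rn n" "(\<lambda>_. R_zero) \<in> C"
    using assms(3) by (auto simp: linear_code_def)
  have dual_C: "herm_dual n C \<subseteq> Rn n"
    by (auto simp: herm_dual_def)
  have "half_lattice (Lambda l n C) = lattice_dual l n (half_lattice (Lambda l n C)) \<longleftrightarrow>
        Lambda l n C = Lambda l n (herm_dual n C)"
    unfolding lattice_dual_half_Lambda[OF assms(1) C] half_lattice_eq_iff ..
  also have "\<dots> \<longleftrightarrow> herm_dual n C = C"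
    using rho_image_Lambda[OF C(1), of l] rho_image_Lambda[OF dual_C, of l] by metis
  finally show ?thesis by simp
qed

end
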